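(* Let $P$ be a rooted forest on $[n]$ with natural labeling and let $\mathcal{M}^{\hat\partial}$ be the monoid of maps $\mathcal{L}(P)\to\mathcal{L}(P)$ generated by $\hat\partial_1,\dots,\hat\partial_n$. If $x\in\mathcal{M}^{\hat\partial}$ is idempotent ($x^2=x$), then $\operatorname{Rfactor}(x)=I_x$.
   Context: A rooted forest is a disjoint union of rooted trees, a rooted tree being a connected finite poset in which each element is covered by at most one element. $\mathcal{L}(P)=\{\pi\in S_n : i\prec j \Rightarrow \pi^{-1}_i<\pi^{-1}_j\}$ in one-line notation. $\pi\tau_i$ ($1\le i<n$) swaps $\pi_i,\pi_{i+1}$ if incomparable and is $\pi$ otherwise; $\partial_j=\tau_j\cdots\tau_{n-1}$; $\hat\partial_i$ is defined by $\pi\hat\partial_i=\pi\partial_{\pi^{-1}_i}$. Maps act on the right and compose as $\pi(xy)=(\pi x)y$; the monoid contains the identity. For $x\in\mathcal{M}^{\hat\partial}$: $\operatorname{im}(x)=\{\pi x:\pi\in\mathcal{L}(P)\}$; $\operatorname{rfactor}(x)$ is the longest word $u$ such that every element of $\operatorname{im}(x)$ (as a word $\pi_1\cdots\pi_n$) ends with $u$; $\operatorname{Rfactor}(x)$ is the set of letters of $\operatorname{rfactor}(x)$; $I_x=\{i\in[n]:\hat\partial_i x=x\}$. *)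

theory Defs
  imports Main "HOL-Library.Sublist"
begin

definition strict_poset_on :: "nat \<Rightarrow> (nat \<Rightarrow> nat \<Rightarrow> bool) \<Rightarrow> bool" where
  "strict_poset_on n prec \<longleftrightarrow>
     (\<forall>a b. prec a b \<longrightarrow> a \<in> {1..n} \<and> b \<in> {1..n}) \<and>
     (\<forall>a. \<not> prec a a) \<and>
     (\<forall>a b c. prec a b \<longrightarrow> prec b c \<longrightarrow> prec a c)"

definition covers :: "(nat \<Rightarrow> nat \<Rightarrow> bool) \<Rightarrow> nat \<Rightarrow> nat \<Rightarrow> bool" where
  "covers prec a b \<longleftrightarrow> prec a b \<and> \<not> (\<exists>c. prec a c \<and> prec c b)"

definition rooted_forest :: "nat \<Rightarrow> (nat \<Rightarrow> nat \<Rightarrow> bool) \<Rightarrow> bool" where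
  "rooted_forest n prec \<longleftrightarrow> strict_poset_on n prec \<and>
     (\<forall>a\<in>{1..n}. \<forall>b c. covers prec a b \<longrightarrow> covers prec a c \<longrightarrow> b = c)"

definition natural_labeling :: "(nat \<Rightarrow> nat \<Rightarrow> bool) \<Rightarrow> bool" where
  "natural_labeling prec \<longleftrightarrow> (\<forall>i j. prec i j \<longrightarrow> i < j)"

text \<open>1-based position of letter a in word pi, i.e. pi^{-1}_a.\<close>
definition pos :: "nat list \<Rightarrow> nat \<Rightarrow> nat" where
  "pos pi a = length (takeWhile (\<lambda>y. y \<noteq> a) pi) + 1"

definition linext :: "nat \<Rightarrow> (nat \<Rightarrow> nat \<Rightarrow> bool) \<Rightarrow> nat list set" where
  "linext n prec = {pi. distinct pi \<and> set pi = {1..n} \<and>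
      (\<forall>i j. prec i j \<longrightarrow> pos pi i < pos pi j)}"

definition comparable :: "(nat \<Rightarrow> nat \<Rightarrow> bool) \<Rightarrow> nat \<Rightarrow> nat \<Rightarrow> bool" where
  "comparable prec a b \<longleftrightarrow> prec a b \<or> prec b a"

text \<open>pi tau_i (1 \<le> i < n): swap positions i, i+1 (1-based) if incomparable.\<close>
definition tau :: "(nat \<Rightarrow> nat \<Rightarrow> bool) \<Rightarrow> nat \<Rightarrow> nat list \<Rightarrow> nat list" where
  "tau prec i pi = (if \<not> comparable prec (pi ! (i - 1)) (pi ! i)
                     then pi[i - 1 := pi ! i, i := pi ! (i - 1)] else pi)"

text \<open>partial_j = tau_j ... tau_{n-1}, acting on the right (tau_j applied first).\<close>
definition bdelta :: "nat \<Rightarrow> (nat \<Rightarrow> nat \<Rightarrow> bool) \<Rightarrow> nat \<Rightarrow> nat list \<Rightarrow> nat list" where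
  "bdelta n prec j pi = foldl (\<lambda>p i. tau prec i p) pi [j..<n]"

definition hbdelta :: "nat \<Rightarrow> (nat \<Rightarrow> nat \<Rightarrow> bool) \<Rightarrow> nat \<Rightarrow> nat list \<Rightarrow> nat list" where
  "hbdelta n prec i pi = bdelta n prec (pos pi i) pi"

text \<open>The monoid generated by the hat-partials (with identity). A map x acts by
  pi \<mapsto> x pi; right-action composition pi(xy) = (pi x) y is y \<circ> x.\<close>
inductive_set hmonoid :: "nat \<Rightarrow> (nat \<Rightarrow> nat \<Rightarrow> bool) \<Rightarrow> (nat list \<Rightarrow> nat list) set"
  for n prec where
  ident: "(\<lambda>pi. pi) \<in> hmonoid n prec"
| step: "x \<in> hmonoid n prec \<Longrightarrow> i \<in> {1..n} \<Longrightarrow> (\<lambda>pi. hbdelta n prec i (x pi)) \<in> hmonoid n prec"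

text \<open>Maps are compared as maps L(P) \<rightarrow> L(P).\<close>
definition idempotent_on :: "nat \<Rightarrow> (nat \<Rightarrow> nat \<Rightarrow> bool) \<Rightarrow> (nat list \<Rightarrow> nat list) \<Rightarrow> bool" where
  "idempotent_on n prec x \<longleftrightarrow> (\<forall>pi\<in>linext n prec. x (x pi) = x pi)"

definition img :: "nat \<Rightarrow> (nat \<Rightarrow> nat \<Rightarrow> bool) \<Rightarrow> (nat list \<Rightarrow> nat list) \<Rightarrow> nat list set" where
  "img n prec x = x ` linext n prec"

definition rfactor :: "nat \<Rightarrow> (nat \<Rightarrow> nat \<Rightarrow> bool) \<Rightarrow> (nat list \<Rightarrow> nat list) \<Rightarrow> nat list" where
  "rfactor n prec x = (THE u. (\<forall>w\<in>img n prec x. suffix u w) \<and>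
      (\<forall>v. (\<forall>w\<in>img n prec x. suffix v w) \<longrightarrow> length v \<le> length u))"

definition Rfactor :: "nat \<Rightarrow> (nat \<Rightarrow> nat \<Rightarrow> bool) \<Rightarrow> (nat list \<Rightarrow> nat list) \<Rightarrow> nat set" where
  "Rfactor n prec x = set (rfactor n prec x)"

text \<open>I_x = {i : hat-partial_i x = x}, i.e. (pi hbdelta_i) x = pi x on L(P).\<close>
definition Ifix :: "nat \<Rightarrow> (nat \<Rightarrow> nat \<Rightarrow> bool) \<Rightarrow> (nat list \<Rightarrow> nat list) \<Rightarrow> nat set" where
  "Ifix n prec x = {i \<in> {1..n}. \<forall>pi\<in>linext n prec. x (hbdelta n prec i pi) = x pi}"

end

theory Submission
  imports Defs
begin

text \<open>Let \<open>u = rfactor x\<close> and \<open>R\<close> its letter set; \<open>R\<close> is an up-set, being the letter set of a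
  suffix of a linear extension.  The hat-partial \<open>\<partial>\<^sub>i\<close> carries the letter \<open>i\<close> to the right,
  handing over to a larger letter whenever it meets one; as the elements above \<open>i\<close> form a chain,
  the letters not above \<open>i\<close> keep their relative order.  If two linear extensions end with the same
  word \<open>w\<close>, so do their images under \<open>\<partial>\<^sub>i\<close>, and they even share a longer suffix when \<open>i \<notin> w\<close>:
  the letter pushed onto \<open>w\<close> is the largest one above \<open>i\<close> outside \<open>w\<close>.  By induction, every element
  of the monoid either keeps suffixes with letter set \<open>R\<close> in place without reordering the other
  letters, or lengthens all common suffixes with letter set \<open>R\<close>.  An idempotent fixes its image, so
  the second case contradicts the maximality of \<open>u\<close>; thus \<open>x \<pi>\<close> is the subword of \<open>\<pi>\<close> outside \<open>R\<close>
  followed by \<open>u\<close>.  This gives \<open>\<partial>\<^sub>i x = x\<close> for \<open>i \<in> R\<close>.  For \<open>i \<notin> R\<close>, in a suitable linear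
  extension \<open>\<partial>\<^sub>i\<close> reverses two letters outside \<open>R\<close>: the largest letter above \<open>i\<close> outside \<open>R\<close> and
  the last letter outside \<open>R\<close> of some \<open>\<pi>\<close>, chosen different by maximality of \<open>u\<close>.\<close>

subsection \<open>Positions and linear extensions\<close>

lemma pos_Cons: "pos (x # xs) y = (if y = x then 1 else Suc (pos xs y))"
  by (auto simp: pos_def)

lemma pos_append: "pos (xs @ ys) y = (if y \<in> set xs then pos xs y else length xs + pos ys y)"
  by (induction xs) (auto simp: pos_Cons)

lemma zero_less_pos: "0 < pos xs y"
  by (simp add: pos_def)

lemma pos_le_length: "y \<in> set xs \<Longrightarrow> pos xs y \<le> length xs"
  by (induction xs) (auto simp: pos_Cons)

lemma nth_pos: "y \<in> set xs \<Longrightarrow> xs ! (pos xs y - 1) = y"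
  by (induction xs) (auto simp: pos_Cons nth_Cons_pos zero_less_pos)

lemma pos_nth: "distinct xs \<Longrightarrow> k < length xs \<Longrightarrow> pos xs (xs ! k) = Suc k"
proof (induction xs arbitrary: k)
  case (Cons a xs)
  then show ?case
    by (cases k) (auto simp: pos_Cons nth_mem)
qed simp

lemma sorted_pos_less:
  "sorted xs \<Longrightarrow> distinct xs \<Longrightarrow> y \<in> set xs \<Longrightarrow> z \<in> set xs \<Longrightarrow> y < z \<Longrightarrow> pos xs y < pos xs z"
  by (induction xs) (auto simp: pos_Cons zero_less_pos Suc_le_eq)

lemma linext_length: "\<sigma> \<in> linext n prec \<Longrightarrow> length \<sigma> = n"
  unfolding linext_def using distinct_card by fastforce

lemma linext_distinct: "\<sigma> \<in> linext n prec \<Longrightarrow> distinct \<sigma>"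
  and linext_set: "\<sigma> \<in> linext n prec \<Longrightarrow> set \<sigma> = {1..n}"
  and linext_pos_less: "\<sigma> \<in> linext n prec \<Longrightarrow> prec a b \<Longrightarrow> pos \<sigma> a < pos \<sigma> b"
  by (auto simp: linext_def)

lemma linext_nth_less:
  assumes "\<sigma> \<in> linext n prec" "k1 < n" "k2 < n" "prec (\<sigma> ! k1) (\<sigma> ! k2)"
  shows "k1 < k2"
  using linext_pos_less[OF assms(1,4)] pos_nth[OF linext_distinct[OF assms(1)]]
    linext_length[OF assms(1)] assms(2,3) by simp

lemma linext_nthI:
  assumes sp: "strict_poset_on n prec" and "distinct \<sigma>" "set \<sigma> = {1..n}"
    and ord: "\<And>k1 k2. k1 < length \<sigma> \<Longrightarrow> k2 < length \<sigma> \<Longrightarrow> prec (\<sigma> ! k1) (\<sigma> ! k2) \<Longrightarrow> k1 < k2"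
  shows "\<sigma> \<in> linext n prec"
proof -
  have "pos \<sigma> a < pos \<sigma> b" if "prec a b" for a b
  proof -
    have "a \<in> set \<sigma>" "b \<in> set \<sigma>"
      using sp that assms(3) unfolding strict_poset_on_def by auto
    then have "pos \<sigma> a - 1 < length \<sigma>" "pos \<sigma> b - 1 < length \<sigma>"
      and "\<sigma> ! (pos \<sigma> a - 1) = a" "\<sigma> ! (pos \<sigma> b - 1) = b"
      using pos_le_length[of a \<sigma>] pos_le_length[of b \<sigma>] zero_less_pos[of \<sigma> a]
        zero_less_pos[of \<sigma> b] nth_pos by auto
    then have "pos \<sigma> a - 1 < pos \<sigma> b - 1" using ord that by metis
    then show ?thesis by simp
  qed
  then show ?thesis using assms(2,3) unfolding linext_def by blast
qed

lemma linext_append_disjoint: "\<alpha> @ w \<in> linext n prec \<Longrightarrow> set \<alpha> \<inter> set w = {}"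
  using linext_distinct by fastforce

lemma linext_suffix_set_eq:
  assumes "\<alpha> @ w \<in> linext n prec" "\<alpha> @ W \<in> linext n prec"
  shows "set W = set w"
proof -
  have "set W = {1..n} - set \<alpha>" "set w = {1..n} - set \<alpha>"
    using linext_append_disjoint[OF assms(1)] linext_append_disjoint[OF assms(2)]
      linext_set[OF assms(1)] linext_set[OF assms(2)] by auto
  then show ?thesis by simp
qed

definition up_closed :: "(nat \<Rightarrow> nat \<Rightarrow> bool) \<Rightarrow> nat set \<Rightarrow> bool" where
  "up_closed prec T \<longleftrightarrow> (\<forall>y z. y \<in> T \<longrightarrow> prec y z \<longrightarrow> z \<in> T)"

lemma linext_suffix_up_closed:
  assumes "\<alpha> @ w \<in> linext n prec" and sp: "strict_poset_on n prec"
  shows "up_closed prec (set w)"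
  unfolding up_closed_def
proof (intro allI impI)
  fix y z assume yw: "y \<in> set w" and yz: "prec y z"
  show "z \<in> set w"
  proof (rule ccontr)
    assume "z \<notin> set w"
    then have "z \<in> set \<alpha>"
      using sp yz linext_set[OF assms(1)] unfolding strict_poset_on_def by auto
    moreover have "y \<notin> set \<alpha>" using linext_append_disjoint[OF assms(1)] yw by blast
    ultimately have "pos (\<alpha> @ w) z < pos (\<alpha> @ w) y"
      using pos_le_length[of z \<alpha>] zero_less_pos[of w y] by (simp add: pos_append)
    then show False using linext_pos_less[OF assms(1) yz] by simp
  qed
qed

lemma upt_linext:
  assumes sp: "strict_poset_on n prec" and nl: "natural_labeling prec"
  shows "[1..<Suc n] \<in> linext n prec"
  by (rule linext_nthI[OF sp]) (use nl in \<open>auto simp: natural_labeling_def simp del: upt_Suc\<close>)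

subsection \<open>Adjacent transpositions\<close>

abbreviation taus :: "(nat \<Rightarrow> nat \<Rightarrow> bool) \<Rightarrow> nat list \<Rightarrow> nat list \<Rightarrow> nat list" where
  "taus prec \<sigma> is \<equiv> foldl (\<lambda>p i. tau prec i p) \<sigma> is"

lemma hbdelta_eq_taus: "hbdelta n prec j \<sigma> = taus prec \<sigma> [pos \<sigma> j..<n]"
  by (simp add: hbdelta_def bdelta_def)

lemma tau_length [simp]: "length (tau prec i s) = length s"
  by (simp add: tau_def)

lemma taus_length [simp]: "length (taus prec s is) = length s"
  by (induction "is" arbitrary: s) auto

lemma set_taus: "\<forall>i\<in>set is. 0 < i \<and> i < length s \<Longrightarrow> set (taus prec s is) = set s"
  by (induction "is" arbitrary: s) (auto simp: tau_def)

lemma tau_linext: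
  assumes sp: "strict_poset_on n prec" and s: "\<sigma> \<in> linext n prec" and i: "0 < i" "i < n"
  shows "tau prec i \<sigma> \<in> linext n prec"
proof (cases "comparable prec (\<sigma> ! (i - 1)) (\<sigma> ! i)")
  case True then show ?thesis using s by (simp add: tau_def)
next
  case False
  have len: "length \<sigma> = n" using s linext_length by blast
  define sw where "sw k = (if k = i - 1 then i else if k = i then i - 1 else k)" for k
  have nth_tau: "tau prec i \<sigma> ! k = \<sigma> ! sw k" if "k < n" for k
    using that len i False by (auto simp: tau_def sw_def nth_list_update)
  have sw_swap: "sw i = i - 1" "sw (i - 1) = i" using i by (auto simp: sw_def)
  show ?thesis
  proof (rule linext_nthI[OF sp])
    show "distinct (tau prec i \<sigma>)" "set (tau prec i \<sigma>) = {1..n}"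
      using s len i False by (simp_all add: tau_def linext_distinct linext_set)
    fix k1 k2 assume k: "k1 < length (tau prec i \<sigma>)" "k2 < length (tau prec i \<sigma>)"
      and p: "prec (tau prec i \<sigma> ! k1) (tau prec i \<sigma> ! k2)"
    have "sw k1 < n" "sw k2 < n" using k i len by (auto simp: sw_def)
    then have "sw k1 < sw k2"
      using linext_nth_less[OF s] p nth_tau k len by simp
    moreover have "\<not> (k1 = i \<and> k2 = i - 1)"
    proof
      assume "k1 = i \<and> k2 = i - 1"
      then have "prec (\<sigma> ! (i - 1)) (\<sigma> ! i)" using p nth_tau k len by (simp add: sw_swap[simplified])
      then show False using False by (simp add: comparable_def)
    qed
    ultimately show "k1 < k2" using i by (auto simp: sw_def split: if_splits)
  qed
qed

lemma taus_linext:
  assumes sp: "strict_poset_on n prec"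
  shows "\<sigma> \<in> linext n prec \<Longrightarrow> \<forall>i\<in>set is. 0 < i \<and> i < n \<Longrightarrow> taus prec \<sigma> is \<in> linext n prec"
  by (induction "is" arbitrary: \<sigma>) (auto intro: tau_linext[OF sp])

lemma hbdelta_linext:
  "strict_poset_on n prec \<Longrightarrow> \<sigma> \<in> linext n prec \<Longrightarrow> hbdelta n prec i \<sigma> \<in> linext n prec"
  unfolding hbdelta_eq_taus by (rule taus_linext) (use zero_less_pos[of \<sigma> i] in auto)

lemma hmonoid_linext:
  assumes "strict_poset_on n prec"
  shows "x \<in> hmonoid n prec \<Longrightarrow> \<sigma> \<in> linext n prec \<Longrightarrow> x \<sigma> \<in> linext n prec"
  by (induction x arbitrary: \<sigma> rule: hmonoid.induct) (auto intro: hbdelta_linext[OF assms])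

lemma taus_append_shift:
  assumes "length \<alpha> < a"
  shows "taus prec (\<alpha> @ w) [a..<b] = \<alpha> @ taus prec w [a - length \<alpha>..<b - length \<alpha>]"
proof -
  have "taus prec (\<alpha> @ w) (map (\<lambda>i. i + length \<alpha>) is) = \<alpha> @ taus prec w is"
    if "\<forall>i\<in>set is. 0 < i" for "is" w
    using that
    by (induction "is" arbitrary: w) (auto simp: tau_def nth_append list_update_append)
  moreover have "map (\<lambda>i. i + m) [c..<d] = [c + m..<d + m]" for m c d
    by (induction d) auto
  then have "[a..<b] = map (\<lambda>i. i + length \<alpha>) [a - length \<alpha>..<b - length \<alpha>]"
    using assms by (cases "a \<le> b") auto
  moreover have "\<forall>i\<in>set [a - length \<alpha>..<b - length \<alpha>]. 0 < i" using assms by auto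
  ultimately show ?thesis by metis
qed

lemma take_taus: "\<forall>i\<in>set is. m < i \<Longrightarrow> take m (taus prec s is) = take m s"
  by (induction "is" arbitrary: s) (auto simp: tau_def)

lemma taus_from_position:
  assumes k: "0 < k" "k \<le> length \<sigma>" and drop: "drop (k - 1) \<sigma> = e # w"
  shows "taus prec \<sigma> [k..<length \<sigma>] = take (k - 1) \<sigma> @ taus prec (e # w) [1..<Suc (length w)]"
proof -
  have split: "\<sigma> = take (k - 1) \<sigma> @ e # w" by (metis append_take_drop_id drop)
  have len: "length (take (k - 1) \<sigma>) = k - 1" "k - (k - 1) = 1" "length \<sigma> - (k - 1) = Suc (length w)"
    using k arg_cong[OF drop, of length] by auto
  show ?thesis
    by (subst (1) split) (use k len in \<open>simp add: taus_append_shift\<close>)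
qed

lemma taus_swap_head:
  assumes "\<not> comparable prec a b" "a \<noteq> b"
  obtains R where "taus prec (a # b # v) [1..<Suc (Suc (length v))] = b # R" and "a \<in> set R"
proof -
  let ?rest = "taus prec (b # a # v) [2..<Suc (Suc (length v))]"
  have "[1..<Suc (Suc (length v))] = 1 # [2..<Suc (Suc (length v))]"
    by (simp add: upt_conv_Cons numeral_2_eq_2 del: upt_Suc)
  moreover have "tau prec 1 (a # b # v) = b # a # v" using assms(1) by (simp add: tau_def)
  ultimately have "taus prec (a # b # v) [1..<Suc (Suc (length v))] = ?rest" by (simp del: upt_Suc)
  moreover have "take 1 ?rest = [b]" by (subst take_taus) (auto simp del: upt_Suc)
  moreover have "a \<in> set ?rest" by (subst set_taus) (auto simp del: upt_Suc)
  ultimately show thesis using that assms(2) by (cases ?rest) (auto simp del: upt_Suc)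
qed

lemma filter_swap:
  assumes "0 < i" "i < length l" "\<not> P (l ! (i - 1))"
  shows "filter P (l[i - 1 := l ! i, i := l ! (i - 1)]) = filter P l"
proof -
  define a b where "a = l ! (i - 1)" and "b = l ! i"
  have "drop (i - 1) l = a # b # drop (Suc i) l"
    using assms Cons_nth_drop_Suc[of "i - 1" l] Cons_nth_drop_Suc[of i l]
    unfolding a_def b_def by simp
  then have l: "l = take (i - 1) l @ a # b # drop (Suc i) l"
    by (metis append_take_drop_id)
  have "l[i - 1 := b, i := a] = take (i - 1) l @ b # a # drop (Suc i) l"
    using assms by (subst l) (auto simp: list_update_append nth_append)
  then show ?thesis using assms(3) unfolding a_def[symmetric] b_def[symmetric]
    by (subst (2) l) auto
qed

subsection \<open>Rooted forests\<close>

abbreviation preceq :: "(nat \<Rightarrow> nat \<Rightarrow> bool) \<Rightarrow> nat \<Rightarrow> nat \<Rightarrow> bool" where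
  "preceq prec a b \<equiv> a = b \<or> prec a b"

lemma strict_poset_on_rooted_forest: "rooted_forest n prec \<Longrightarrow> strict_poset_on n prec"
  by (simp add: rooted_forest_def)

lemma strict_poset_on_dom: "strict_poset_on n prec \<Longrightarrow> prec a b \<Longrightarrow> a \<in> {1..n} \<and> b \<in> {1..n}"
  and strict_poset_on_irrefl: "strict_poset_on n prec \<Longrightarrow> \<not> prec a a"
  and strict_poset_on_trans: "strict_poset_on n prec \<Longrightarrow> prec a b \<Longrightarrow> prec b c \<Longrightarrow> prec a c"
  unfolding strict_poset_on_def by blast+

lemma preceq_trans:
  "strict_poset_on n prec \<Longrightarrow> preceq prec a b \<Longrightarrow> preceq prec b c \<Longrightarrow> preceq prec a c"
  using strict_poset_on_trans by blast

lemma preceq_antisym: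
  "strict_poset_on n prec \<Longrightarrow> preceq prec a b \<Longrightarrow> preceq prec b a \<Longrightarrow> a = b"
  using strict_poset_on_trans strict_poset_on_irrefl by blast

lemma natural_labeling_less: "natural_labeling prec \<Longrightarrow> prec a b \<Longrightarrow> a < b"
  by (simp add: natural_labeling_def)

lemma exists_cover_below:
  assumes sp: "strict_poset_on n prec" and nl: "natural_labeling prec" and jy: "prec j y"
  obtains c where "covers prec j c" "preceq prec c y"
proof -
  define c where "c = (LEAST c. prec j c \<and> preceq prec c y)"
  have c: "prec j c \<and> preceq prec c y"
    unfolding c_def by (rule LeastI[of _ y]) (use jy in simp)
  have "\<not> prec j d" if "prec d c" for d
  proof
    assume "prec j d"
    then have "c \<le> d"
      unfolding c_def using c that strict_poset_on_trans[OF sp] by (blast intro: Least_le)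
    then show False using natural_labeling_less[OF nl that] by simp
  qed
  then show thesis using that c by (auto simp: covers_def)
qed

lemma forest_upper_comparable:
  assumes rf: "rooted_forest n prec" and nl: "natural_labeling prec"
  shows "preceq prec j y \<Longrightarrow> preceq prec j z \<Longrightarrow> preceq prec y z \<or> preceq prec z y"
proof (induction "n - j" arbitrary: j rule: less_induct)
  case less
  have sp: "strict_poset_on n prec" using rf strict_poset_on_rooted_forest by blast
  show ?case
  proof (cases "y = j \<or> z = j")
    case True then show ?thesis using less.prems by auto
  next
    case False
    then have jy: "prec j y" and jz: "prec j z" using less.prems by auto
    obtain c where c: "covers prec j c" "preceq prec c y" using exists_cover_below[OF sp nl jy] .
    obtain c' where c': "covers prec j c'" "preceq prec c' z" using exists_cover_below[OF sp nl jz] .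
    have "j \<in> {1..n}" using strict_poset_on_dom[OF sp jy] by blast
    then have "c' = c" using rf c(1) c'(1) unfolding rooted_forest_def by blast
    moreover have "j < c" "c \<le> n"
      using c(1) natural_labeling_less[OF nl] strict_poset_on_dom[OF sp] by (auto simp: covers_def)
    ultimately show ?thesis using less.hyps[of c] c c' by simp
  qed
qed

subsection \<open>Hat-partials\<close>

text \<open>The state of the computation of \<open>hbdelta n prec j \<rho>\<close> after the transpositions
  \<open>tau\<^sub>p, \<dots>, tau\<^sub>k\<^sub>-\<^sub>1\<close>, where \<open>p = pos \<rho> j\<close>.  The letter \<open>\<sigma> ! (k - 1)\<close> is the one
  being carried to the right: the largest letter above \<open>j\<close> among \<open>\<rho> ! (p - 1), \<dots>, \<rho> ! (k - 1)\<close>.\<close>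

definition bubble_inv ::
  "nat \<Rightarrow> (nat \<Rightarrow> nat \<Rightarrow> bool) \<Rightarrow> nat list \<Rightarrow> nat \<Rightarrow> nat \<Rightarrow> nat list \<Rightarrow> bool" where
  "bubble_inv n prec \<rho> j k \<sigma> \<longleftrightarrow> \<sigma> \<in> linext n prec \<and>
     (\<forall>q. k \<le> q \<longrightarrow> q < n \<longrightarrow> \<sigma> ! q = \<rho> ! q) \<and>
     (\<exists>q. pos \<rho> j - 1 \<le> q \<and> q < k \<and> \<sigma> ! (k - 1) = \<rho> ! q) \<and>
     preceq prec j (\<sigma> ! (k - 1)) \<and>
     (\<forall>q. pos \<rho> j - 1 \<le> q \<longrightarrow> q < k \<longrightarrow> preceq prec j (\<rho> ! q) \<longrightarrow>
        preceq prec (\<rho> ! q) (\<sigma> ! (k - 1))) \<and>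
     filter (\<lambda>y. \<not> preceq prec j y) \<sigma> = filter (\<lambda>y. \<not> preceq prec j y) \<rho>"

lemma bubble_inv_tau:
  assumes rf: "rooted_forest n prec" and nl: "natural_labeling prec"
    and \<rho>: "\<rho> \<in> linext n prec" and k: "0 < k" "k < n"
    and inv: "bubble_inv n prec \<rho> j k \<sigma>"
  shows "bubble_inv n prec \<rho> j (Suc k) (tau prec k \<sigma>)"
proof -
  have sp: "strict_poset_on n prec" using rf strict_poset_on_rooted_forest by blast
  define e b where "e = \<sigma> ! (k - 1)" and "b = \<sigma> ! k"
  from inv have \<sigma>: "\<sigma> \<in> linext n prec"
    and tail: "\<forall>q. k \<le> q \<longrightarrow> q < n \<longrightarrow> \<sigma> ! q = \<rho> ! q"
    and origin: "\<exists>q. pos \<rho> j - 1 \<le> q \<and> q < k \<and> e = \<rho> ! q"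
    and je: "preceq prec j e"
    and emax: "\<forall>q. pos \<rho> j - 1 \<le> q \<longrightarrow> q < k \<longrightarrow> preceq prec j (\<rho> ! q) \<longrightarrow> preceq prec (\<rho> ! q) e"
    and filt: "filter (\<lambda>y. \<not> preceq prec j y) \<sigma> = filter (\<lambda>y. \<not> preceq prec j y) \<rho>"
    unfolding bubble_inv_def e_def by blast+
  have b: "b = \<rho> ! k" using tail k b_def by simp
  have "\<not> prec b e"
  proof
    assume "prec b e"
    with origin b obtain q where "q < k" "prec (\<rho> ! k) (\<rho> ! q)" by blast
    then show False using linext_nth_less[OF \<rho>, of k q] k by auto
  qed
  show ?thesis
  proof (cases "prec e b")
    case True
    then have "tau prec k \<sigma> = \<sigma>" by (simp add: tau_def comparable_def e_def b_def)
    moreover have "preceq prec j b" using je True strict_poset_on_trans[OF sp] by blast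
    moreover have "preceq prec (\<rho> ! q) b"
      if "pos \<rho> j - 1 \<le> q" "q < Suc k" "preceq prec j (\<rho> ! q)" for q
    proof (cases "q = k")
      case False
      then have "preceq prec (\<rho> ! q) e" using emax that by auto
      then show ?thesis using True strict_poset_on_trans[OF sp] by blast
    qed (use b in simp)
    ultimately show ?thesis
      using \<sigma> tail filt origin b unfolding bubble_inv_def b_def by (auto intro!: exI[of _ k])
  next
    case False
    have "e \<noteq> b"
      using linext_distinct[OF \<sigma>] linext_length[OF \<sigma>] k unfolding e_def b_def
      by (simp add: nth_eq_iff_index_eq)
    with False \<open>\<not> prec b e\<close> have incomp: "\<not> comparable prec (\<sigma> ! (k - 1)) (\<sigma> ! k)"
      by (simp add: comparable_def e_def b_def)
    define \<sigma>' where "\<sigma>' = \<sigma>[k - 1 := b, k := e]"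
    have \<sigma>': "tau prec k \<sigma> = \<sigma>'" using incomp by (simp add: tau_def \<sigma>'_def e_def b_def)
    have carried: "\<sigma>' ! k = e" using linext_length[OF \<sigma>] k by (simp add: \<sigma>'_def)
    have "preceq prec (\<rho> ! q) e"
      if "pos \<rho> j - 1 \<le> q" "q < Suc k" "preceq prec j (\<rho> ! q)" for q
    proof (cases "q = k")
      case True
      then show ?thesis
        using forest_upper_comparable[OF rf nl je, of b] that b False \<open>e \<noteq> b\<close> by auto
    qed (use emax that in auto)
    moreover have "filter (\<lambda>y. \<not> preceq prec j y) \<sigma>' = filter (\<lambda>y. \<not> preceq prec j y) \<sigma>"
      using filter_swap[of k \<sigma>] k je linext_length[OF \<sigma>] by (simp add: \<sigma>'_def e_def b_def)
    moreover have "\<sigma>' \<in> linext n prec" using tau_linext[OF sp \<sigma> k] \<sigma>' by simp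
    ultimately show ?thesis
      using tail filt origin je carried unfolding bubble_inv_def \<sigma>' by (auto simp: \<sigma>'_def)
  qed
qed

lemma bubble_inv_taus:
  assumes rf: "rooted_forest n prec" and nl: "natural_labeling prec"
    and \<rho>: "\<rho> \<in> linext n prec" and j: "j \<in> {1..n}" and k: "pos \<rho> j \<le> k"
  shows "k \<le> n \<Longrightarrow> bubble_inv n prec \<rho> j k (taus prec \<rho> [pos \<rho> j..<k])"
  using k
proof (induction k rule: dec_induct)
  case base
  have "j \<in> set \<rho>" using j linext_set[OF \<rho>] by simp
  then have "\<rho> ! (pos \<rho> j - 1) = j" by (rule nth_pos)
  moreover have "q = pos \<rho> j - 1" if "pos \<rho> j - 1 \<le> q" "q < pos \<rho> j" for q
    using that by simp
  ultimately show ?case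
    using \<rho> zero_less_pos[of \<rho> j] unfolding bubble_inv_def by auto
next
  case (step k)
  have "taus prec \<rho> [pos \<rho> j..<Suc k] = tau prec k (taus prec \<rho> [pos \<rho> j..<k])"
    using step.hyps(1) by simp
  then show ?case
    using bubble_inv_tau[OF rf nl \<rho>] step zero_less_pos[of \<rho> j] by simp
qed

lemma filter_hbdelta_outside:
  assumes rf: "rooted_forest n prec" and nl: "natural_labeling prec"
    and \<rho>: "\<rho> \<in> linext n prec" and j: "j \<in> T" "j \<in> {1..n}" and up: "up_closed prec T"
  shows "filter (\<lambda>y. y \<notin> T) (hbdelta n prec j \<rho>) = filter (\<lambda>y. y \<notin> T) \<rho>"
proof -
  have "j \<in> set \<rho>" using j linext_set[OF \<rho>] by simp
  then have "pos \<rho> j \<le> n" using pos_le_length linext_length[OF \<rho>] by metis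
  then have "bubble_inv n prec \<rho> j n (hbdelta n prec j \<rho>)"
    unfolding hbdelta_eq_taus using bubble_inv_taus[OF rf nl \<rho> j(2)] by simp
  then have "filter (\<lambda>y. \<not> preceq prec j y) (hbdelta n prec j \<rho>) = filter (\<lambda>y. \<not> preceq prec j y) \<rho>"
    unfolding bubble_inv_def by blast
  moreover have "filter (\<lambda>y. y \<notin> T) xs = filter (\<lambda>y. y \<notin> T) (filter (\<lambda>y. \<not> preceq prec j y) xs)"
    for xs
    using j up by (auto simp: up_closed_def intro!: filter_cong)
  ultimately show ?thesis by metis
qed

lemma hbdelta_append_in_suffix:
  assumes \<rho>: "\<alpha> @ w \<in> linext n prec" and jw: "j \<in> set w"
  shows "hbdelta n prec j (\<alpha> @ w) = \<alpha> @ taus prec w [pos w j..<length w]"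
proof -
  have "j \<notin> set \<alpha>" using linext_append_disjoint[OF \<rho>] jw by blast
  then have p: "pos (\<alpha> @ w) j = length \<alpha> + pos w j" by (simp add: pos_append)
  have "n = length \<alpha> + length w" using linext_length[OF \<rho>] by simp
  then show ?thesis
    unfolding hbdelta_eq_taus p using taus_append_shift zero_less_pos[of w j] by simp
qed

lemma hbdelta_append_not_in_suffix:
  assumes rf: "rooted_forest n prec" and nl: "natural_labeling prec"
    and \<rho>: "\<alpha> @ w \<in> linext n prec" and j: "j \<in> {1..n}" "j \<notin> set w"
  obtains \<beta> e where "hbdelta n prec j (\<alpha> @ w) = \<beta> @ taus prec (e # w) [1..<Suc (length w)]"
    and "e \<notin> set w" and "preceq prec j e"
    and "\<forall>y. preceq prec j y \<longrightarrow> y \<notin> set w \<longrightarrow> preceq prec y e"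
proof -
  define k where "k = length \<alpha>"
  have len: "length (\<alpha> @ w) = n" using linext_length[OF \<rho>] .
  have "j \<in> set (\<alpha> @ w)" using j(1) linext_set[OF \<rho>] by simp
  then have ja: "j \<in> set \<alpha>" using j(2) by simp
  then have pj: "pos (\<alpha> @ w) j = pos \<alpha> j" by (simp add: pos_append)
  then have k: "pos (\<alpha> @ w) j \<le> k" "0 < k" "k \<le> n"
    using pos_le_length[OF ja] len zero_less_pos[of \<alpha> j] by (auto simp: k_def)
  define \<sigma> where "\<sigma> = taus prec (\<alpha> @ w) [pos (\<alpha> @ w) j..<k]"
  define e where "e = \<sigma> ! (k - 1)"
  from bubble_inv_taus[OF rf nl \<rho> j(1) k(1,3)]
  have \<sigma>: "\<sigma> \<in> linext n prec"
    and tail: "\<forall>q. k \<le> q \<longrightarrow> q < n \<longrightarrow> \<sigma> ! q = (\<alpha> @ w) ! q"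
    and origin: "\<exists>q. q < k \<and> e = (\<alpha> @ w) ! q"
    and je: "preceq prec j e"
    and emax: "\<forall>q. pos (\<alpha> @ w) j - 1 \<le> q \<longrightarrow> q < k \<longrightarrow> preceq prec j ((\<alpha> @ w) ! q) \<longrightarrow>
      preceq prec ((\<alpha> @ w) ! q) e"
    unfolding bubble_inv_def \<sigma>_def[symmetric] e_def by blast+
  have "drop k \<sigma> = w"
    using tail len linext_length[OF \<sigma>] by (intro nth_equalityI) (auto simp: k_def nth_append)
  then have "drop (k - 1) \<sigma> = e # w"
    using k linext_length[OF \<sigma>] Cons_nth_drop_Suc[of "k - 1" \<sigma>] unfolding e_def by simp
  moreover have "hbdelta n prec j (\<alpha> @ w) = taus prec \<sigma> [k..<n]"
    unfolding hbdelta_eq_taus \<sigma>_def using k upt_add_eq_append[of "pos (\<alpha> @ w) j" k "n - k"] by simp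
  ultimately have "hbdelta n prec j (\<alpha> @ w) = take (k - 1) \<sigma> @ taus prec (e # w) [1..<Suc (length w)]"
    using taus_from_position[of k \<sigma>] k linext_length[OF \<sigma>] by simp
  moreover have "e \<notin> set w"
    using origin linext_append_disjoint[OF \<rho>] by (auto simp: k_def nth_append dest: nth_mem)
  moreover have "\<forall>y. preceq prec j y \<longrightarrow> y \<notin> set w \<longrightarrow> preceq prec y e"
  proof (intro allI impI)
    fix y assume y: "preceq prec j y" "y \<notin> set w"
    have "y \<in> set (\<alpha> @ w)"
      using y j linext_set[OF \<rho>] strict_poset_on_dom[OF strict_poset_on_rooted_forest[OF rf]]
      by auto
    with y have ya: "y \<in> set \<alpha>" by simp
    then have "pos (\<alpha> @ w) y - 1 < k" "(\<alpha> @ w) ! (pos (\<alpha> @ w) y - 1) = y"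
      using pos_le_length[OF ya] zero_less_pos[of \<alpha> y] nth_pos[of y "\<alpha> @ w"]
      by (auto simp: pos_append k_def)
    moreover have "pos (\<alpha> @ w) j \<le> pos (\<alpha> @ w) y"
      using y(1) linext_pos_less[OF \<rho>] by (auto intro: less_imp_le)
    ultimately show "preceq prec y e" using emax y(1) by (metis diff_le_mono)
  qed
  ultimately show thesis using that je by blast
qed

text \<open>The letter pushed onto the suffix \<open>w\<close> depends on \<open>j\<close> and \<open>w\<close> only.\<close>

lemma hbdelta_common_suffix_grows:
  assumes rf: "rooted_forest n prec" and nl: "natural_labeling prec"
    and \<rho>: "\<alpha> @ w \<in> linext n prec" and \<rho>': "\<alpha>' @ w \<in> linext n prec"
    and j: "j \<in> {1..n}" "j \<notin> set w"
  shows "\<exists>W. suffix W (hbdelta n prec j (\<alpha> @ w)) \<and> suffix W (hbdelta n prec j (\<alpha>' @ w)) \<and>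
    length W = Suc (length w)"
proof -
  have sp: "strict_poset_on n prec" using rf strict_poset_on_rooted_forest by blast
  obtain \<beta> e where e: "hbdelta n prec j (\<alpha> @ w) = \<beta> @ taus prec (e # w) [1..<Suc (length w)]"
    "e \<notin> set w" "preceq prec j e" "\<forall>y. preceq prec j y \<longrightarrow> y \<notin> set w \<longrightarrow> preceq prec y e"
    by (rule hbdelta_append_not_in_suffix[OF rf nl \<rho> j])
  obtain \<beta>' e' where e': "hbdelta n prec j (\<alpha>' @ w) = \<beta>' @ taus prec (e' # w) [1..<Suc (length w)]"
    "e' \<notin> set w" "preceq prec j e'" "\<forall>y. preceq prec j y \<longrightarrow> y \<notin> set w \<longrightarrow> preceq prec y e'"
    by (rule hbdelta_append_not_in_suffix[OF rf nl \<rho>' j])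
  have "e = e'" using preceq_antisym[OF sp] e e' by metis
  then show ?thesis using e(1) e'(1) by (auto simp: suffix_def)
qed

lemma hbdelta_common_suffix:
  assumes rf: "rooted_forest n prec" and nl: "natural_labeling prec"
    and \<rho>: "\<alpha> @ w \<in> linext n prec" and \<rho>': "\<alpha>' @ w \<in> linext n prec" and j: "j \<in> {1..n}"
  shows "\<exists>W. suffix W (hbdelta n prec j (\<alpha> @ w)) \<and> suffix W (hbdelta n prec j (\<alpha>' @ w)) \<and>
    length w \<le> length W"
proof (cases "j \<in> set w")
  case True
  then show ?thesis
    using hbdelta_append_in_suffix[OF \<rho>] hbdelta_append_in_suffix[OF \<rho>'] by (auto simp: suffix_def)
next
  case False
  then show ?thesis using hbdelta_common_suffix_grows[OF rf nl \<rho> \<rho>' j] by fastforce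
qed

subsection \<open>Stable and growing elements of the monoid\<close>

definition suffix_stable ::
  "nat \<Rightarrow> (nat \<Rightarrow> nat \<Rightarrow> bool) \<Rightarrow> nat set \<Rightarrow> (nat list \<Rightarrow> nat list) \<Rightarrow> bool" where
  "suffix_stable n prec T x \<longleftrightarrow>
     (\<forall>\<pi>\<in>linext n prec. filter (\<lambda>y. y \<notin> T) (x \<pi>) = filter (\<lambda>y. y \<notin> T) \<pi>) \<and>
     (\<forall>\<alpha> \<alpha>' w. \<alpha> @ w \<in> linext n prec \<longrightarrow> \<alpha>' @ w \<in> linext n prec \<longrightarrow> set w = T \<longrightarrow>
        (\<exists>W. x (\<alpha> @ w) = \<alpha> @ W \<and> x (\<alpha>' @ w) = \<alpha>' @ W))"

definition suffix_growing ::
  "nat \<Rightarrow> (nat \<Rightarrow> nat \<Rightarrow> bool) \<Rightarrow> nat set \<Rightarrow> (nat list \<Rightarrow> nat list) \<Rightarrow> bool" where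
  "suffix_growing n prec T x \<longleftrightarrow>
     (\<forall>\<alpha> \<alpha>' w. \<alpha> @ w \<in> linext n prec \<longrightarrow> \<alpha>' @ w \<in> linext n prec \<longrightarrow> set w = T \<longrightarrow>
        (\<exists>W. suffix W (x (\<alpha> @ w)) \<and> suffix W (x (\<alpha>' @ w)) \<and> length w < length W))"

lemma suffix_stable_hbdelta_in:
  assumes rf: "rooted_forest n prec" and nl: "natural_labeling prec" and up: "up_closed prec T"
    and x: "x \<in> hmonoid n prec" and i: "i \<in> T" "i \<in> {1..n}" and stable: "suffix_stable n prec T x"
  shows "suffix_stable n prec T (\<lambda>\<pi>. hbdelta n prec i (x \<pi>))"
  unfolding suffix_stable_def
proof (intro conjI ballI allI impI)
  have xL: "x \<pi> \<in> linext n prec" if "\<pi> \<in> linext n prec" for \<pi>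
    using hmonoid_linext[OF strict_poset_on_rooted_forest[OF rf] x that] .
  {
    fix \<pi> assume \<pi>: "\<pi> \<in> linext n prec"
    show "filter (\<lambda>y. y \<notin> T) (hbdelta n prec i (x \<pi>)) = filter (\<lambda>y. y \<notin> T) \<pi>"
      using filter_hbdelta_outside[OF rf nl xL[OF \<pi>] i up] stable \<pi>
      unfolding suffix_stable_def by simp
  next
    fix \<alpha> \<alpha>' w assume \<rho>: "\<alpha> @ w \<in> linext n prec" "\<alpha>' @ w \<in> linext n prec" "set w = T"
    obtain W where W: "x (\<alpha> @ w) = \<alpha> @ W" "x (\<alpha>' @ w) = \<alpha>' @ W"
      using stable \<rho> unfolding suffix_stable_def by blast
    have "set W = T"
      using linext_suffix_set_eq[OF \<rho>(1)] xL[OF \<rho>(1)] W(1) \<rho>(3) by simp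
    then show "\<exists>W. hbdelta n prec i (x (\<alpha> @ w)) = \<alpha> @ W \<and> hbdelta n prec i (x (\<alpha>' @ w)) = \<alpha>' @ W"
      using hbdelta_append_in_suffix xL[OF \<rho>(1)] xL[OF \<rho>(2)] W i(1) by metis
  }
qed

lemma suffix_growing_hbdelta_not_in:
  assumes rf: "rooted_forest n prec" and nl: "natural_labeling prec"
    and x: "x \<in> hmonoid n prec" and i: "i \<notin> T" "i \<in> {1..n}" and stable: "suffix_stable n prec T x"
  shows "suffix_growing n prec T (\<lambda>\<pi>. hbdelta n prec i (x \<pi>))"
  unfolding suffix_growing_def
proof (intro allI impI)
  have xL: "x \<pi> \<in> linext n prec" if "\<pi> \<in> linext n prec" for \<pi>
    using hmonoid_linext[OF strict_poset_on_rooted_forest[OF rf] x that] .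
  fix \<alpha> \<alpha>' w assume \<rho>: "\<alpha> @ w \<in> linext n prec" "\<alpha>' @ w \<in> linext n prec" "set w = T"
  obtain W where W: "x (\<alpha> @ w) = \<alpha> @ W" "x (\<alpha>' @ w) = \<alpha>' @ W"
    using stable \<rho> unfolding suffix_stable_def by blast
  have "set W = T"
    using linext_suffix_set_eq[OF \<rho>(1)] xL[OF \<rho>(1)] W(1) \<rho>(3) by simp
  moreover have "length W = length w"
    using linext_length[OF \<rho>(1)] linext_length[OF xL[OF \<rho>(1)]] W(1) by simp
  ultimately show "\<exists>W. suffix W (hbdelta n prec i (x (\<alpha> @ w))) \<and>
      suffix W (hbdelta n prec i (x (\<alpha>' @ w))) \<and> length w < length W"
    using hbdelta_common_suffix_grows[OF rf nl, of \<alpha> W \<alpha>' i] xL[OF \<rho>(1)] xL[OF \<rho>(2)] W i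
    by fastforce
qed

lemma suffix_growing_hbdelta:
  assumes rf: "rooted_forest n prec" and nl: "natural_labeling prec"
    and x: "x \<in> hmonoid n prec" and i: "i \<in> {1..n}" and growing: "suffix_growing n prec T x"
  shows "suffix_growing n prec T (\<lambda>\<pi>. hbdelta n prec i (x \<pi>))"
  unfolding suffix_growing_def
proof (intro allI impI)
  have xL: "x \<pi> \<in> linext n prec" if "\<pi> \<in> linext n prec" for \<pi>
    using hmonoid_linext[OF strict_poset_on_rooted_forest[OF rf] x that] .
  fix \<alpha> \<alpha>' w assume \<rho>: "\<alpha> @ w \<in> linext n prec" "\<alpha>' @ w \<in> linext n prec" "set w = T"
  obtain W where W: "suffix W (x (\<alpha> @ w))" "suffix W (x (\<alpha>' @ w))" "length w < length W"
    using growing \<rho> unfolding suffix_growing_def by blast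
  then obtain \<beta> \<beta>' where "x (\<alpha> @ w) = \<beta> @ W" "x (\<alpha>' @ w) = \<beta>' @ W"
    by (auto simp: suffix_def)
  then show "\<exists>W. suffix W (hbdelta n prec i (x (\<alpha> @ w))) \<and>
      suffix W (hbdelta n prec i (x (\<alpha>' @ w))) \<and> length w < length W"
    using hbdelta_common_suffix[OF rf nl, of \<beta> W \<beta>' i] xL[OF \<rho>(1)] xL[OF \<rho>(2)] W(3) i
    by (metis order.strict_trans2)
qed

lemma hmonoid_stable_or_growing:
  assumes rf: "rooted_forest n prec" and nl: "natural_labeling prec" and up: "up_closed prec T"
  shows "x \<in> hmonoid n prec \<Longrightarrow> suffix_stable n prec T x \<or> suffix_growing n prec T x"
proof (induction x rule: hmonoid.induct)
  case ident
  then show ?case by (simp add: suffix_stable_def)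
next
  case (step x i)
  then show ?case
    using suffix_stable_hbdelta_in[OF rf nl up] suffix_growing_hbdelta_not_in[OF rf nl]
      suffix_growing_hbdelta[OF rf nl]
    by blast
qed

subsection \<open>Hat-partials reversing two letters\<close>

lemma pos_le_pos_last_filter:
  "distinct xs \<Longrightarrow> z \<in> set xs \<Longrightarrow> P z \<Longrightarrow> pos xs z \<le> pos xs (last (filter P xs))"
proof (induction xs)
  case (Cons x xs)
  show ?case
  proof (cases "filter P xs = []")
    case True
    then show ?thesis using Cons.prems by (auto simp: filter_empty_conv pos_Cons)
  next
    case False
    then have "last (filter P xs) \<in> set xs" using last_in_set by fastforce
    then show ?thesis using Cons False by (auto simp: pos_Cons)
  qed
qed simp

lemma linext_last_filter_above:
  assumes sp: "strict_poset_on n prec" and \<pi>: "\<pi> \<in> linext n prec"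
    and ne: "filter P \<pi> \<noteq> []" and bz: "prec (last (filter P \<pi>)) z"
  shows "\<not> P z"
proof
  assume "P z"
  moreover have "z \<in> set \<pi>" using strict_poset_on_dom[OF sp bz] linext_set[OF \<pi>] by simp
  ultimately have "pos \<pi> z \<le> pos \<pi> (last (filter P \<pi>))"
    using pos_le_pos_last_filter linext_distinct[OF \<pi>] by metis
  then show False using linext_pos_less[OF \<pi> bz] by simp
qed

lemma exists_greatest_above_outside:
  assumes rf: "rooted_forest n prec" and nl: "natural_labeling prec"
    and i: "i \<in> {1..n}" "i \<notin> S"
  obtains a where "a \<notin> S" "preceq prec i a" "\<forall>y. preceq prec i y \<longrightarrow> y \<notin> S \<longrightarrow> preceq prec y a"
proof -
  have sp: "strict_poset_on n prec" using rf strict_poset_on_rooted_forest by blast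
  define A where "A = {y. preceq prec i y \<and> y \<notin> S}"
  have "A \<subseteq> {1..n}" using i strict_poset_on_dom[OF sp] by (auto simp: A_def)
  then have "finite A" by (rule finite_subset) simp
  moreover have "i \<in> A" using i by (simp add: A_def)
  ultimately have a: "Max A \<in> A" "\<forall>y\<in>A. y \<le> Max A" by (auto intro!: Max_in)
  have "preceq prec y (Max A)" if "y \<in> A" for y
    using forest_upper_comparable[OF rf nl, of i y "Max A"] a that natural_labeling_less[OF nl]
    by (fastforce simp: A_def)
  then show thesis using that a by (auto simp: A_def)
qed

lemma blocks_linext:
  assumes sp: "strict_poset_on n prec" and nl: "natural_labeling prec"
    and S: "S \<subseteq> {1..n}" "up_closed prec S"
    and a: "a \<in> {1..n}" "a \<notin> S" "\<forall>z. prec a z \<longrightarrow> z \<in> S"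
    and b: "b \<in> {1..n}" "b \<notin> S" "\<forall>z. prec b z \<longrightarrow> z \<in> S" "b \<noteq> a"
  shows "sorted_list_of_set ({1..n} - S - {a, b}) @ a # b # sorted_list_of_set S \<in> linext n prec"
    (is "?Rl @ a # b # ?Sl \<in> _")
proof -
  define R where "R = {1..n} - S - {a, b}"
  have "finite S" using S(1) finite_subset by blast
  then have Sl: "set ?Sl = S" "distinct ?Sl" "sorted ?Sl" by auto
  have Rl: "set ?Rl = R" "distinct ?Rl" "sorted ?Rl" by (auto simp: R_def)
  have pos: "pos (?Rl @ a # b # ?Sl) y =
      (if y \<in> R then pos ?Rl y else if y = a then Suc (length ?Rl)
       else if y = b then Suc (Suc (length ?Rl)) else Suc (Suc (length ?Rl + pos ?Sl y)))" for y
    using b(4) Rl(1) by (auto simp: pos_append pos_Cons R_def)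
  have "pos (?Rl @ a # b # ?Sl) y < pos (?Rl @ a # b # ?Sl) z" if yz: "prec y z" for y z
  proof -
    have yn: "y \<in> {1..n}" and zn: "z \<in> {1..n}" using strict_poset_on_dom[OF sp yz] by auto
    have "y < z" using natural_labeling_less[OF nl yz] .
    show ?thesis
    proof (cases "z \<in> S")
      case True
      then have "z \<notin> R" "z \<noteq> a" "z \<noteq> b" using a(2) b(2) by (auto simp: R_def)
      then have pz: "pos (?Rl @ a # b # ?Sl) z = Suc (Suc (length ?Rl + pos ?Sl z))"
        using pos[of z] by simp
      show ?thesis
      proof (cases "y \<in> S")
        case True
        then have "y \<notin> R" "y \<noteq> a" "y \<noteq> b" using a(2) b(2) by (auto simp: R_def)
        then show ?thesis
          using pos[of y] pz sorted_pos_less[OF Sl(3,2)] Sl(1) True \<open>z \<in> S\<close> \<open>y < z\<close> by simp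
      next
        case False
        then have "y \<in> R \<or> y = a \<or> y = b" using yn by (auto simp: R_def)
        then have "pos (?Rl @ a # b # ?Sl) y \<le> Suc (Suc (length ?Rl))"
          using pos[of y] Rl(1) pos_le_length[of y ?Rl] by auto
        then show ?thesis using pz zero_less_pos[of ?Sl z] by linarith
      qed
    next
      case False
      then have "y \<in> R" using yn yz S(2) a(3) b(3) by (auto simp: R_def up_closed_def)
      moreover have "z \<in> R \<Longrightarrow> pos ?Rl y < pos ?Rl z"
        using sorted_pos_less[OF Rl(3,2), of y z] Rl(1) \<open>y \<in> R\<close> \<open>y < z\<close> by blast
      moreover have "pos ?Rl y \<le> length ?Rl" using \<open>y \<in> R\<close> Rl(1) pos_le_length by metis
      moreover have "a \<notin> R" "b \<notin> R" by (simp_all add: R_def)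
      moreover have "z \<in> R \<or> z = a \<or> z = b" using zn False by (auto simp: R_def)
      ultimately show ?thesis using pos[of y] pos[of z] b(4) by auto
    qed
  qed
  moreover have "distinct (?Rl @ a # b # ?Sl)" "set (?Rl @ a # b # ?Sl) = {1..n}"
    using Rl Sl S(1) a b by (auto simp: R_def)
  ultimately show ?thesis unfolding linext_def by blast
qed

text \<open>In the witness \<open>\<dots> @ a # b # sorted_list_of_set S\<close> the hat-partial carries \<open>a\<close> up to
  the incomparable letter \<open>b\<close> and swaps them.\<close>

lemma hbdelta_reorders_outside:
  assumes rf: "rooted_forest n prec" and nl: "natural_labeling prec"
    and S: "S \<subseteq> {1..n}" "up_closed prec S" and i: "i \<in> {1..n}" "i \<notin> S"
    and a: "a \<notin> S" "preceq prec i a" "\<forall>y. preceq prec i y \<longrightarrow> y \<notin> S \<longrightarrow> preceq prec y a"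
    and b: "b \<in> {1..n}" "b \<notin> S" "\<forall>z. prec b z \<longrightarrow> z \<in> S" "b \<noteq> a"
  shows "\<exists>\<pi>\<in>linext n prec. filter (\<lambda>y. y \<notin> S) (hbdelta n prec i \<pi>) \<noteq> filter (\<lambda>y. y \<notin> S) \<pi>"
proof -
  have sp: "strict_poset_on n prec" using rf strict_poset_on_rooted_forest by blast
  have an: "a \<in> {1..n}" using a(2) i strict_poset_on_dom[OF sp] by blast
  have above_a: "\<forall>z. prec a z \<longrightarrow> z \<in> S"
    using a preceq_trans[OF sp] preceq_antisym[OF sp] strict_poset_on_irrefl[OF sp] by metis
  have incomparable: "\<not> comparable prec a b" using above_a b(2,3) a(1) by (auto simp: comparable_def)
  define Sl where "Sl = sorted_list_of_set S"
  define \<alpha> w where "\<alpha> = sorted_list_of_set ({1..n} - S - {a, b}) @ [a]" and "w = b # Sl"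
  have \<pi>: "\<alpha> @ w \<in> linext n prec"
    using blocks_linext[OF sp nl S an a(1) above_a b] by (simp add: \<alpha>_def w_def Sl_def)
  have "finite S" using S(1) by (rule finite_subset) simp
  then have set_w: "set w = insert b S" by (simp add: w_def Sl_def)
  have "i \<noteq> b" using a(1,3) b(2,3,4) by auto
  then have iw: "i \<notin> set w" using i(2) set_w by simp
  obtain \<beta> e where hb: "hbdelta n prec i (\<alpha> @ w) = \<beta> @ taus prec (e # w) [1..<Suc (length w)]"
    and e: "e \<notin> set w" "preceq prec i e" "\<forall>y. preceq prec i y \<longrightarrow> y \<notin> set w \<longrightarrow> preceq prec y e"
    by (rule hbdelta_append_not_in_suffix[OF rf nl \<pi> i(1) iw])
  have "e = a" using preceq_antisym[OF sp] a e set_w b(4) by auto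
  obtain R where hb': "hbdelta n prec i (\<alpha> @ w) = \<beta> @ b # R" and "a \<in> set R"
    using taus_swap_head[OF incomparable b(4)[symmetric], of Sl] hb \<open>e = a\<close> by (auto simp: w_def)
  let ?P = "\<lambda>y. y \<notin> S"
  have "filter ?P (hbdelta n prec i (\<alpha> @ w)) \<noteq> filter ?P (\<alpha> @ w)"
  proof
    assume eq: "filter ?P (hbdelta n prec i (\<alpha> @ w)) = filter ?P (\<alpha> @ w)"
    have "filter ?P (\<alpha> @ w) = filter ?P (sorted_list_of_set ({1..n} - S - {a, b})) @ [a, b]"
      using a(1) b(2) \<open>finite S\<close> by (simp add: \<alpha>_def w_def Sl_def filter_empty_conv)
    then have "last (filter ?P (hbdelta n prec i (\<alpha> @ w))) = b" using eq by simp
    moreover have "filter ?P R \<noteq> []" using \<open>a \<in> set R\<close> a(1) by (auto simp: filter_empty_conv)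
    ultimately have "last (filter ?P R) = b" using hb' b(2) by simp
    then have "b \<in> set R" using last_in_set[OF \<open>filter ?P R \<noteq> []\<close>] by simp
    moreover have "distinct (\<beta> @ b # R)"
      using linext_distinct[OF hbdelta_linext[OF sp \<pi>, of i]] hb' by simp
    ultimately show False by simp
  qed
  then show ?thesis using \<pi> by blast
qed

subsection \<open>Idempotents\<close>

lemma
  assumes "w0 \<in> img n prec x"
  shows rfactor_suffix: "w \<in> img n prec x \<Longrightarrow> suffix (rfactor n prec x) w"
    and rfactor_longest: "\<forall>w\<in>img n prec x. suffix v w \<Longrightarrow> length v \<le> length (rfactor n prec x)"
proof -
  define C where "C v \<longleftrightarrow> (\<forall>w\<in>img n prec x. suffix v w)" for v
  have "\<forall>v. C v \<longrightarrow> length v < Suc (length w0)"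
    using assms by (auto simp: C_def suffix_def)
  then obtain u where u: "C u" "\<forall>v. C v \<longrightarrow> length v \<le> length u"
    using ex_has_greatest_nat[of C "[]" length "Suc (length w0)"] by (auto simp: C_def)
  have "rfactor n prec x = u"
    unfolding rfactor_def C_def[symmetric]
  proof (rule the_equality)
    fix u' assume u': "C u' \<and> (\<forall>v. C v \<longrightarrow> length v \<le> length u')"
    then have "length u' = length u" using u by (simp add: le_antisym)
    moreover have "suffix u' w0" "suffix u w0" using u u' assms by (auto simp: C_def)
    ultimately have "suffix u' u" using suffix_length_suffix by (metis order.refl)
    with \<open>length u' = length u\<close> show "u' = u" by (auto simp: suffix_def)
  qed (use u in blast)
  then show "w \<in> img n prec x \<Longrightarrow> suffix (rfactor n prec x) w"
    and "\<forall>w\<in>img n prec x. suffix v w \<Longrightarrow> length v \<le> length (rfactor n prec x)"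
    using u by (auto simp: C_def)
qed

locale hmonoid_idempotent =
  fixes n :: nat and prec :: "nat \<Rightarrow> nat \<Rightarrow> bool" and x :: "nat list \<Rightarrow> nat list"
  assumes forest: "rooted_forest n prec" and natural: "natural_labeling prec"
    and monoid: "x \<in> hmonoid n prec" and idem: "idempotent_on n prec x"
begin

lemma poset: "strict_poset_on n prec"
  using forest strict_poset_on_rooted_forest by blast

lemma id_linext: "[1..<Suc n] \<in> linext n prec"
  using upt_linext[OF poset natural] .

lemma image_linext: "\<pi> \<in> linext n prec \<Longrightarrow> x \<pi> \<in> linext n prec"
  using hmonoid_linext[OF poset monoid] .

lemma rfactor_suffix_image: "\<pi> \<in> linext n prec \<Longrightarrow> suffix (rfactor n prec x) (x \<pi>)"
  using rfactor_suffix[of "x [1..<Suc n]"] id_linext by (auto simp: img_def)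

lemma rfactor_longest_image:
  "(\<And>\<pi>. \<pi> \<in> linext n prec \<Longrightarrow> suffix v (x \<pi>)) \<Longrightarrow> length v \<le> length (rfactor n prec x)"
  using rfactor_longest[of "x [1..<Suc n]"] id_linext by (auto simp: img_def)

lemma Rfactor_up_closed: "up_closed prec (Rfactor n prec x)"
proof -
  obtain \<beta> where "x [1..<Suc n] = \<beta> @ rfactor n prec x"
    using rfactor_suffix_image[OF id_linext] by (auto simp: suffix_def)
  then show ?thesis
    using linext_suffix_up_closed[OF _ poset] image_linext[OF id_linext]
    unfolding Rfactor_def by metis
qed

lemma Rfactor_subset: "Rfactor n prec x \<subseteq> {1..n}"
  using rfactor_suffix_image[OF id_linext] image_linext[OF id_linext] set_mono_suffix linext_set
  unfolding Rfactor_def by metis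

text \<open>This is where idempotency is used: \<open>x\<close> fixes its image, so a growing common suffix of
  the images would be a common suffix longer than \<open>rfactor\<close>.\<close>

lemma not_suffix_growing: "\<not> suffix_growing n prec (Rfactor n prec x) x"
proof
  assume growing: "suffix_growing n prec (Rfactor n prec x) x"
  let ?u = "rfactor n prec x"
  define \<sigma>0 where "\<sigma>0 = x [1..<Suc n]"
  have \<sigma>0: "\<sigma>0 \<in> linext n prec" "x \<sigma>0 = \<sigma>0"
    using image_linext idem id_linext unfolding \<sigma>0_def idempotent_on_def by auto
  have common: "\<exists>W. suffix W (x \<pi>) \<and> suffix W \<sigma>0 \<and> length ?u < length W"
    if \<pi>: "\<pi> \<in> linext n prec" for \<pi>
  proof -
    obtain \<beta> where x\<pi>: "x \<pi> = \<beta> @ ?u"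
      using rfactor_suffix_image[OF \<pi>] by (auto simp: suffix_def)
    obtain \<beta>0 where \<sigma>0_split: "\<sigma>0 = \<beta>0 @ ?u"
      using rfactor_suffix_image[OF id_linext] by (auto simp: suffix_def \<sigma>0_def)
    have "\<exists>W. suffix W (x (\<beta> @ ?u)) \<and> suffix W (x (\<beta>0 @ ?u)) \<and> length ?u < length W"
    proof (rule growing[unfolded suffix_growing_def, rule_format])
      show "\<beta> @ ?u \<in> linext n prec" using image_linext[OF \<pi>] x\<pi> by simp
      show "\<beta>0 @ ?u \<in> linext n prec" using \<sigma>0(1) \<sigma>0_split by simp
    qed (simp add: Rfactor_def)
    moreover have "x (x \<pi>) = x \<pi>" using idem \<pi> unfolding idempotent_on_def by blast
    ultimately show ?thesis using x\<pi> \<sigma>0_split \<sigma>0(2) by simp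
  qed
  obtain W0 where "suffix W0 \<sigma>0" "length ?u < length W0" using common[OF \<sigma>0(1)] by blast
  then have lu: "Suc (length ?u) \<le> n" using linext_length[OF \<sigma>0(1)] by (auto simp: suffix_def)
  define v where "v = drop (n - Suc (length ?u)) \<sigma>0"
  have v: "length v = Suc (length ?u)" "suffix v \<sigma>0"
    using lu linext_length[OF \<sigma>0(1)] by (auto simp: v_def suffix_drop)
  have "suffix v (x \<pi>)" if \<pi>: "\<pi> \<in> linext n prec" for \<pi>
  proof -
    obtain W where "suffix W (x \<pi>)" "suffix W \<sigma>0" "length ?u < length W" using common[OF \<pi>] by blast
    then show ?thesis using suffix_length_suffix[OF v(2)] v(1) suffix_order.trans by (metis Suc_leI)
  qed
  then show False using rfactor_longest_image v(1) by fastforce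
qed

lemma image_eq_filter_append_rfactor: "\<pi> \<in> linext n prec \<Longrightarrow> x \<pi> = filter (\<lambda>y. y \<notin> Rfactor n prec x) \<pi> @ rfactor n prec x"
proof -
  assume \<pi>: "\<pi> \<in> linext n prec"
  have "suffix_stable n prec (Rfactor n prec x) x"
    using hmonoid_stable_or_growing[OF forest natural Rfactor_up_closed monoid] not_suffix_growing
    by blast
  then have "filter (\<lambda>y. y \<notin> Rfactor n prec x) (x \<pi>) = filter (\<lambda>y. y \<notin> Rfactor n prec x) \<pi>"
    using \<pi> unfolding suffix_stable_def by blast
  moreover obtain \<beta> where \<beta>: "x \<pi> = \<beta> @ rfactor n prec x"
    using rfactor_suffix_image[OF \<pi>] by (auto simp: suffix_def)
  moreover have "filter (\<lambda>y. y \<notin> Rfactor n prec x) (\<beta> @ rfactor n prec x) = \<beta>"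
    using linext_append_disjoint image_linext[OF \<pi>] \<beta> unfolding Rfactor_def
    by (force simp: filter_empty_conv intro: filter_True)
  ultimately show ?thesis by simp
qed

lemma Rfactor_subset_Ifix: "Rfactor n prec x \<subseteq> Ifix n prec x"
proof
  fix i assume i: "i \<in> Rfactor n prec x"
  then have "i \<in> {1..n}" using Rfactor_subset by blast
  moreover have "x (hbdelta n prec i \<pi>) = x \<pi>" if "\<pi> \<in> linext n prec" for \<pi>
    using image_eq_filter_append_rfactor[OF hbdelta_linext[OF poset that]] image_eq_filter_append_rfactor[OF that]
      filter_hbdelta_outside[OF forest natural that i \<open>i \<in> {1..n}\<close> Rfactor_up_closed] by simp
  ultimately show "i \<in> Ifix n prec x" unfolding Ifix_def by blast
qed

lemma last_outside_Rfactor_varies: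
  assumes "c \<in> {1..n}" "c \<notin> Rfactor n prec x"
  shows "\<exists>\<pi>\<in>linext n prec. last (filter (\<lambda>y. y \<notin> Rfactor n prec x) \<pi>) \<noteq> a"
proof (rule ccontr)
  assume "\<not> ?thesis"
  then have last: "last (filter (\<lambda>y. y \<notin> Rfactor n prec x) \<pi>) = a" if "\<pi> \<in> linext n prec" for \<pi>
    using that by blast
  have "suffix (a # rfactor n prec x) (x \<pi>)" if "\<pi> \<in> linext n prec" for \<pi>
  proof -
    have "filter (\<lambda>y. y \<notin> Rfactor n prec x) \<pi> \<noteq> []"
      using assms linext_set[OF that] by (auto simp: filter_empty_conv)
    then show ?thesis
      using image_eq_filter_append_rfactor[OF that] append_butlast_last_id last[OF that]
      by (metis append.assoc append_Cons append_Nil suffixI)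
  qed
  then show False using rfactor_longest_image[of "a # rfactor n prec x"] by simp
qed

lemma Ifix_subset_Rfactor: "Ifix n prec x \<subseteq> Rfactor n prec x"
proof
  fix i assume "i \<in> Ifix n prec x"
  then have i: "i \<in> {1..n}" and fixed: "\<And>\<pi>. \<pi> \<in> linext n prec \<Longrightarrow> x (hbdelta n prec i \<pi>) = x \<pi>"
    unfolding Ifix_def by auto
  let ?R = "Rfactor n prec x"
  show "i \<in> ?R"
  proof (rule ccontr)
    assume iR: "i \<notin> ?R"
    have keeps: "filter (\<lambda>y. y \<notin> ?R) (hbdelta n prec i \<pi>) = filter (\<lambda>y. y \<notin> ?R) \<pi>"
      if "\<pi> \<in> linext n prec" for \<pi>
      using fixed[OF that] image_eq_filter_append_rfactor[OF that] image_eq_filter_append_rfactor[OF hbdelta_linext[OF poset that]] by simp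
    obtain a where a: "a \<notin> ?R" "preceq prec i a" "\<forall>y. preceq prec i y \<longrightarrow> y \<notin> ?R \<longrightarrow> preceq prec y a"
      using exists_greatest_above_outside[OF forest natural i iR] by blast
    obtain \<pi> where \<pi>: "\<pi> \<in> linext n prec" "last (filter (\<lambda>y. y \<notin> ?R) \<pi>) \<noteq> a"
      using last_outside_Rfactor_varies[OF i iR] by blast
    define b where "b = last (filter (\<lambda>y. y \<notin> ?R) \<pi>)"
    have ne: "filter (\<lambda>y. y \<notin> ?R) \<pi> \<noteq> []"
      using i iR linext_set[OF \<pi>(1)] by (auto simp: filter_empty_conv)
    have b_in: "b \<in> set (filter (\<lambda>y. y \<notin> ?R) \<pi>)" unfolding b_def using last_in_set[OF ne] .
    have b: "b \<in> {1..n}" "b \<notin> ?R" "\<forall>z. prec b z \<longrightarrow> z \<in> ?R" "b \<noteq> a"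
    proof -
      show "b \<in> {1..n}" "b \<notin> ?R" using b_in linext_set[OF \<pi>(1)] by auto
      show "\<forall>z. prec b z \<longrightarrow> z \<in> ?R" using linext_last_filter_above[OF poset \<pi>(1) ne] b_def by blast
      show "b \<noteq> a" using \<pi>(2) b_def by simp
    qed
    obtain \<pi>' where "\<pi>' \<in> linext n prec"
      "filter (\<lambda>y. y \<notin> ?R) (hbdelta n prec i \<pi>') \<noteq> filter (\<lambda>y. y \<notin> ?R) \<pi>'"
      using hbdelta_reorders_outside[OF forest natural Rfactor_subset Rfactor_up_closed i iR a b] by blast
    then show False using keeps by blast
  qed
qed

end

theorem lemma6p7:
  fixes n :: nat and prec :: "nat \<Rightarrow> nat \<Rightarrow> bool" and x :: "nat list \<Rightarrow> nat list"
  assumes "rooted_forest n prec"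
    and "natural_labeling prec"
    and "x \<in> hmonoid n prec"
    and "idempotent_on n prec x"
  shows "Rfactor n prec x = Ifix n prec x"
proof -
  interpret hmonoid_idempotent n prec x
    using assms by unfold_locales
  show ?thesis using Rfactor_subset_Ifix Ifix_subset_Rfactor by blast
qed

end
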